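(* Let $A\in(0,1)$, $M<0$, $Q>0$, $S>0$ and consider the planar system $$\frac{du}{d\tau}=u^2\big((u+A)(1-u)(u-M)-Qv\big),\qquad \frac{dv}{d\tau}=S(u+A)(u-v)v .$$ Put $T=1-A+M$, and let $P=(\tilde u,\tilde u)$ with $\tilde u>0$ be a positive equilibrium of the system. Define $$f(\tilde u)=\frac{\tilde u\big((1-\tilde u)(\tilde u-M)+(\tilde u+A)(1-2\tilde u+M)\big)}{A+\tilde u}.$$ Then $P$ is: (i) a saddle point if $\tilde u^2(2\tilde u-T)-AM<0$; (ii) a repeller if $\tilde u^2(2\tilde u-T)-AM>0$ and $S<f(\tilde u)$; (iii) an attractor if $\tilde u^2(2\tilde u-T)-AM>0$ and $S>f(\tilde u)$.
   Context: The positive equilibria of the system are exactly the points $(u,u)$ with $u>0$ and $(u+A)(1-u)(u-M)=Qu$. *)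

theory Defs
  imports "HOL-Analysis.Analysis"
begin

definition vfield :: "real \<Rightarrow> real \<Rightarrow> real \<Rightarrow> real \<Rightarrow> real \<times> real \<Rightarrow> real \<times> real" where
  "vfield A M Q S p = (let u = fst p; v = snd p in
     (u^2 * ((u + A) * (1 - u) * (u - M) - Q * v), S * (u + A) * (u - v) * v))"

definition jac :: "(real \<times> real \<Rightarrow> real \<times> real) \<Rightarrow> real \<times> real \<Rightarrow> nat \<Rightarrow> nat \<Rightarrow> real" where
  "jac F p i j =
     (let g = (if i = 1 then (\<lambda>q. fst (F q)) else (\<lambda>q. snd (F q))) in
      if j = 1 then deriv (\<lambda>x. g (x, snd p)) (fst p)
      else deriv (\<lambda>y. g (fst p, y)) (snd p))"

definition jac_eigenvalue :: "(real \<times> real \<Rightarrow> real \<times> real) \<Rightarrow> real \<times> real \<Rightarrow> complex \<Rightarrow> bool" where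
  "jac_eigenvalue F p z \<longleftrightarrow>
     (complex_of_real (jac F p 1 1) - z) * (complex_of_real (jac F p 2 2) - z)
       - complex_of_real (jac F p 1 2) * complex_of_real (jac F p 2 1) = 0"

definition saddle_point :: "(real \<times> real \<Rightarrow> real \<times> real) \<Rightarrow> real \<times> real \<Rightarrow> bool" where
  "saddle_point F p \<longleftrightarrow> F p = (0, 0) \<and>
     (\<exists>l1 l2 :: real. l1 < 0 \<and> 0 < l2 \<and> jac_eigenvalue F p (complex_of_real l1)
        \<and> jac_eigenvalue F p (complex_of_real l2))"

definition repeller :: "(real \<times> real \<Rightarrow> real \<times> real) \<Rightarrow> real \<times> real \<Rightarrow> bool" where
  "repeller F p \<longleftrightarrow> F p = (0, 0) \<and> (\<forall>z. jac_eigenvalue F p z \<longrightarrow> Re z > 0)"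

definition attractor :: "(real \<times> real \<Rightarrow> real \<times> real) \<Rightarrow> real \<times> real \<Rightarrow> bool" where
  "attractor F p \<longleftrightarrow> F p = (0, 0) \<and> (\<forall>z. jac_eigenvalue F p z \<longrightarrow> Re z < 0)"

end

theory Submission
  imports Defs
begin

text \<open>At a positive equilibrium (u, u) the equilibrium relation (u + A)(1 - u)(u - M) = Q u
  kills the first term of the u-derivative of the u-equation, so the Jacobian has trace
  u (A + u) (f(u) - S) and, after eliminating Q, determinant
  S (u + A) u^2 (u^2 (2u - T) - A M). The claim is then the trace-determinant classification of
  a real 2x2 matrix: a negative determinant gives two real eigenvalues of opposite sign, and
  a positive determinant makes the sign of every eigenvalue's real part that of the trace.\<close>

definition jac_trace :: "(real \<times> real \<Rightarrow> real \<times> real) \<Rightarrow> real \<times> real \<Rightarrow> real" where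
  "jac_trace F p = jac F p 1 1 + jac F p 2 2"

definition jac_det :: "(real \<times> real \<Rightarrow> real \<times> real) \<Rightarrow> real \<times> real \<Rightarrow> real" where
  "jac_det F p = jac F p 1 1 * jac F p 2 2 - jac F p 1 2 * jac F p 2 1"

lemma jac_eigenvalue_iff:
  "jac_eigenvalue F p z \<longleftrightarrow>
     z\<^sup>2 - complex_of_real (jac_trace F p) * z + complex_of_real (jac_det F p) = 0"
proof -
  have "(complex_of_real (jac F p 1 1) - z) * (complex_of_real (jac F p 2 2) - z)
          - complex_of_real (jac F p 1 2) * complex_of_real (jac F p 2 1)
        = z\<^sup>2 - complex_of_real (jac_trace F p) * z + complex_of_real (jac_det F p)"
    by (simp add: jac_trace_def jac_det_def algebra_simps power2_eq_square)
  then show ?thesis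
    by (simp add: jac_eigenvalue_def)
qed

lemma quadratic_root_Re_pos:
  fixes t D :: real and z :: complex
  assumes root: "z\<^sup>2 - complex_of_real t * z + complex_of_real D = 0"
    and "D > 0" "t > 0"
  shows "Re z > 0"
proof -
  have re: "Re z ^ 2 - Im z ^ 2 - t * Re z + D = 0"
    and im: "Im z * (2 * Re z - t) = 0"
    using arg_cong[OF root, of Re] arg_cong[OF root, of Im]
    by (simp_all add: power2_eq_square algebra_simps)
  show ?thesis
  proof (cases "Im z = 0")
    case True
    with re have "t * Re z = Re z ^ 2 + D" by simp
    with \<open>D > 0\<close> \<open>t > 0\<close> show ?thesis
      by (metis add_nonneg_pos zero_le_power2 zero_less_mult_pos)
  next
    case False
    with im \<open>t > 0\<close> show ?thesis by simp
  qed
qed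

lemma quadratic_root_Re_neg:
  fixes t D :: real and z :: complex
  assumes "z\<^sup>2 - complex_of_real t * z + complex_of_real D = 0"
    and "D > 0" "t < 0"
  shows "Re z < 0"
  using quadratic_root_Re_pos[of "- z" "- t" D] assms by simp

lemma quadratic_roots_opposite_signs:
  fixes t D :: real
  assumes "D < 0"
  obtains l1 l2 where "l1 < 0" "0 < l2" "l1\<^sup>2 - t * l1 + D = 0" "l2\<^sup>2 - t * l2 + D = 0"
proof -
  define s where "s = sqrt (t\<^sup>2 - 4 * D)"
  have s2: "s\<^sup>2 = t\<^sup>2 - 4 * D"
    unfolding s_def using \<open>D < 0\<close> zero_le_power2[of t] by (intro real_sqrt_pow2) linarith
  have "\<bar>t\<bar> < s"
    using power2_less_imp_less[of "\<bar>t\<bar>" s] s2 \<open>D < 0\<close> by (simp add: s_def)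
  show ?thesis
  proof
    show "(t - s) / 2 < 0" "0 < (t + s) / 2"
      using \<open>\<bar>t\<bar> < s\<close> by auto
    show "((t - s) / 2)\<^sup>2 - t * ((t - s) / 2) + D = 0" "((t + s) / 2)\<^sup>2 - t * ((t + s) / 2) + D = 0"
      using s2 by (simp_all add: power2_eq_square field_simps)
  qed
qed

lemma saddle_point_if_jac_det_neg:
  assumes "F p = (0, 0)" "jac_det F p < 0"
  shows "saddle_point F p"
proof -
  obtain l1 l2 where "l1 < 0" "0 < l2"
    and "l1\<^sup>2 - jac_trace F p * l1 + jac_det F p = 0"
    and "l2\<^sup>2 - jac_trace F p * l2 + jac_det F p = 0"
    using quadratic_roots_opposite_signs[OF \<open>jac_det F p < 0\<close>] by blast
  then have "jac_eigenvalue F p (complex_of_real l1)" "jac_eigenvalue F p (complex_of_real l2)"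
    unfolding jac_eigenvalue_iff by (metis of_real_0 of_real_add of_real_diff of_real_mult of_real_power)+
  with \<open>l1 < 0\<close> \<open>0 < l2\<close> \<open>F p = (0, 0)\<close> show ?thesis
    unfolding saddle_point_def by blast
qed

lemma repeller_if_jac_det_pos_trace_pos:
  assumes "F p = (0, 0)" "jac_det F p > 0" "jac_trace F p > 0"
  shows "repeller F p"
  using assms quadratic_root_Re_pos unfolding repeller_def jac_eigenvalue_iff by blast

lemma attractor_if_jac_det_pos_trace_neg:
  assumes "F p = (0, 0)" "jac_det F p > 0" "jac_trace F p < 0"
  shows "attractor F p"
  using assms quadratic_root_Re_neg unfolding attractor_def jac_eigenvalue_iff by blast

lemma vfield_diag_eq_0_iff:
  assumes "u \<noteq> 0"
  shows "vfield A M Q S (u, u) = (0, 0) \<longleftrightarrow> (u + A) * (1 - u) * (u - M) = Q * u"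
  using assms by (simp add: vfield_def)

lemma jac_vfield:
  fixes A M Q S u v :: real
  shows "jac (vfield A M Q S) (u, v) 1 1
           = 2 * u * ((u + A) * (1 - u) * (u - M) - Q * v)
             + u\<^sup>2 * ((1 - u) * (u - M) + (u + A) * (1 - 2 * u + M))"
    and "jac (vfield A M Q S) (u, v) 1 2 = - Q * u\<^sup>2"
    and "jac (vfield A M Q S) (u, v) 2 1 = S * v * (2 * u + A - v)"
    and "jac (vfield A M Q S) (u, v) 2 2 = S * (u + A) * (u - 2 * v)"
proof -
  have "((\<lambda>x. x\<^sup>2 * ((x + A) * (1 - x) * (x - M) - Q * v)) has_real_derivative
          2 * u * ((u + A) * (1 - u) * (u - M) - Q * v)
          + u\<^sup>2 * ((1 - u) * (u - M) + (u + A) * (1 - 2 * u + M))) (at u)"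
    by (rule derivative_eq_intros refl | simp)+ (simp add: algebra_simps power2_eq_square)
  then show "jac (vfield A M Q S) (u, v) 1 1
           = 2 * u * ((u + A) * (1 - u) * (u - M) - Q * v)
             + u\<^sup>2 * ((1 - u) * (u - M) + (u + A) * (1 - 2 * u + M))"
    by (simp add: jac_def vfield_def DERIV_imp_deriv)
  have "((\<lambda>y. u\<^sup>2 * ((u + A) * (1 - u) * (u - M) - Q * y)) has_real_derivative - Q * u\<^sup>2) (at v)"
    by (rule derivative_eq_intros refl | simp)+
  then show "jac (vfield A M Q S) (u, v) 1 2 = - Q * u\<^sup>2"
    by (simp add: jac_def vfield_def DERIV_imp_deriv)
  have "((\<lambda>x. S * (x + A) * (x - v) * v) has_real_derivative S * v * (2 * u + A - v)) (at u)"
    by (rule derivative_eq_intros refl | simp)+ (simp add: algebra_simps)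
  then show "jac (vfield A M Q S) (u, v) 2 1 = S * v * (2 * u + A - v)"
    by (simp add: jac_def vfield_def DERIV_imp_deriv)
  have "((\<lambda>y. S * (u + A) * (u - y) * y) has_real_derivative S * (u + A) * (u - 2 * v)) (at v)"
    by (rule derivative_eq_intros refl | simp)+ (simp add: algebra_simps)
  then show "jac (vfield A M Q S) (u, v) 2 2 = S * (u + A) * (u - 2 * v)"
    by (simp add: jac_def vfield_def DERIV_imp_deriv)
qed

lemma jac_trace_vfield_equilibrium:
  assumes "(u + A) * (1 - u) * (u - M) = Q * u"
  shows "jac_trace (vfield A M Q S) (u, u)
           = u * (u * ((1 - u) * (u - M) + (u + A) * (1 - 2 * u + M)) - S * (u + A))"
  unfolding jac_trace_def jac_vfield assms by (simp add: algebra_simps power2_eq_square)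

lemma jac_det_vfield_equilibrium:
  assumes "(u + A) * (1 - u) * (u - M) = Q * u"
  shows "jac_det (vfield A M Q S) (u, u)
           = S * (u + A) * u\<^sup>2 * (u\<^sup>2 * (2 * u - (1 - A + M)) - A * M)"
proof -
  have "jac_det (vfield A M Q S) (u, u)
          = S * (u + A) * u\<^sup>2 * (Q * u - u * ((1 - u) * (u - M) + (u + A) * (1 - 2 * u + M)))"
    unfolding jac_det_def jac_vfield assms by (simp add: algebra_simps power2_eq_square)
  also have "\<dots> = S * (u + A) * u\<^sup>2 * (u\<^sup>2 * (2 * u - (1 - A + M)) - A * M)"
    by (simp only: assms[symmetric]) (simp add: algebra_simps power2_eq_square)
  finally show ?thesis .
qed

theorem lemma3:
  fixes A M Q S u :: real
  assumes "0 < A" "A < 1" "M < 0" "Q > 0" "S > 0"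
    and "u > 0" and "vfield A M Q S (u, u) = (0, 0)"
  defines "T \<equiv> 1 - A + M"
    and "f \<equiv> u * ((1 - u) * (u - M) + (u + A) * (1 - 2 * u + M)) / (A + u)"
  shows "(u^2 * (2 * u - T) - A * M < 0 \<longrightarrow> saddle_point (vfield A M Q S) (u, u))
       \<and> (u^2 * (2 * u - T) - A * M > 0 \<and> S < f \<longrightarrow> repeller (vfield A M Q S) (u, u))
       \<and> (u^2 * (2 * u - T) - A * M > 0 \<and> S > f \<longrightarrow> attractor (vfield A M Q S) (u, u))"
proof -
  let ?F = "vfield A M Q S" and ?g = "(1 - u) * (u - M) + (u + A) * (1 - 2 * u + M)"
  have equilibrium: "(u + A) * (1 - u) * (u - M) = Q * u"
    using assms(7) vfield_diag_eq_0_iff \<open>u > 0\<close> by simp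
  have "u + A > 0" using assms by simp
  have det: "jac_det ?F (u, u) = S * (u + A) * u^2 * (u^2 * (2 * u - T) - A * M)"
    using jac_det_vfield_equilibrium[OF equilibrium] by (simp add: T_def)
  have det_sign: "jac_det ?F (u, u) < 0 \<longleftrightarrow> u^2 * (2 * u - T) - A * M < 0"
    "jac_det ?F (u, u) > 0 \<longleftrightarrow> u^2 * (2 * u - T) - A * M > 0"
    unfolding det using \<open>u + A > 0\<close> assms by (simp_all add: zero_less_mult_iff mult_less_0_iff)
  have f_eq: "f = u * ?g / (u + A)"
    by (simp add: f_def add.commute)
  have trace: "jac_trace ?F (u, u) = u * (u * ?g - S * (u + A))"
    using jac_trace_vfield_equilibrium[OF equilibrium] .
  have trace_sign: "jac_trace ?F (u, u) > 0 \<longleftrightarrow> S < f" "jac_trace ?F (u, u) < 0 \<longleftrightarrow> S > f"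
    unfolding trace f_eq using \<open>u + A > 0\<close> \<open>u > 0\<close>
    by (simp_all add: zero_less_mult_iff mult_less_0_iff pos_less_divide_eq pos_divide_less_eq)
  show ?thesis
    using saddle_point_if_jac_det_neg repeller_if_jac_det_pos_trace_pos
      attractor_if_jac_det_pos_trace_neg assms(7) det_sign trace_sign
    by blast
qed

end
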